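(* Let $A$ be an MV-algebra such that the set $\operatorname{Der}(A)$ of $(\odot,\vee)$-derivations on $A$ is closed under pointwise $\wedge$ (so that it is a lattice under pointwise $\vee,\wedge$). Then $\chi^{(A)}=\{\chi^{(u)}:u\in A\}$ is a filter of the lattice $\operatorname{Der}(A)$, i.e. it is nonempty, closed under $\wedge$, and if $\chi^{(u)}\preceq d$ with $d\in\operatorname{Der}(A)$ then $d\in\chi^{(A)}$; here $\chi^{(u)}(1)=u$ and $\chi^{(u)}(x)=x$ for $x\neq 1$.
   Context: An MV-algebra is an algebra $(A,\oplus,{}^*,0)$ of type $(2,1,0)$ satisfying: $x\oplus(y\oplus z)=(x\oplus y)\oplus z$, $x\oplus y=y\oplus x$, $x\oplus 0=x$, $x^{**}=x$, $x\oplus 0^*=0^*$, $(x^*\oplus y)^*\oplus y=(y^*\oplus x)^*\oplus x$. Put $1=0^*$ and $x\odot y=(x^*\oplus y^* )^*$. The natural order is $x\le y$ iff $x^*\oplus y=1$, with lattice operations $x\vee y=(x\odot y^* )\oplus y$, $x\wedge y=x\odot(x^*\oplus y)$. A $(\odot,\vee)$-derivation on $A$ is a map $d:A\to A$ with $d(x\odot y)=(d(x)\odot y)\vee(x\odot d(y))$ for all $x,y\in A$. Maps are ordered by $d\preceq d'$ iff $d(x)\le d'(x)$ for all $x$, with pointwise $\vee,\wedge$. *)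

theory Defs
  imports Main
begin

definition mv_algebra :: "('a \<Rightarrow> 'a \<Rightarrow> 'a) \<Rightarrow> ('a \<Rightarrow> 'a) \<Rightarrow> 'a \<Rightarrow> bool" where
  "mv_algebra opl st z \<longleftrightarrow>
     (\<forall>x y w. opl x (opl y w) = opl (opl x y) w) \<and>
     (\<forall>x y. opl x y = opl y x) \<and>
     (\<forall>x. opl x z = x) \<and>
     (\<forall>x. st (st x) = x) \<and>
     (\<forall>x. opl x (st z) = st z) \<and>
     (\<forall>x y. opl (st (opl (st x) y)) y = opl (st (opl (st y) x)) x)"

definition mv_one :: "('a \<Rightarrow> 'a) \<Rightarrow> 'a \<Rightarrow> 'a" where
  "mv_one st z = st z"

definition mv_odot :: "('a \<Rightarrow> 'a \<Rightarrow> 'a) \<Rightarrow> ('a \<Rightarrow> 'a) \<Rightarrow> 'a \<Rightarrow> 'a \<Rightarrow> 'a" where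
  "mv_odot opl st x y = st (opl (st x) (st y))"

definition mv_sup :: "('a \<Rightarrow> 'a \<Rightarrow> 'a) \<Rightarrow> ('a \<Rightarrow> 'a) \<Rightarrow> 'a \<Rightarrow> 'a \<Rightarrow> 'a" where
  "mv_sup opl st x y = opl (mv_odot opl st x (st y)) y"

definition mv_inf :: "('a \<Rightarrow> 'a \<Rightarrow> 'a) \<Rightarrow> ('a \<Rightarrow> 'a) \<Rightarrow> 'a \<Rightarrow> 'a \<Rightarrow> 'a" where
  "mv_inf opl st x y = mv_odot opl st x (opl (st x) y)"

definition mv_le :: "('a \<Rightarrow> 'a \<Rightarrow> 'a) \<Rightarrow> ('a \<Rightarrow> 'a) \<Rightarrow> 'a \<Rightarrow> 'a \<Rightarrow> 'a \<Rightarrow> bool" where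
  "mv_le opl st z x y \<longleftrightarrow> opl (st x) y = mv_one st z"

definition odot_sup_derivations :: "('a \<Rightarrow> 'a \<Rightarrow> 'a) \<Rightarrow> ('a \<Rightarrow> 'a) \<Rightarrow> ('a \<Rightarrow> 'a) set" where
  "odot_sup_derivations opl st =
     {d. \<forall>x y. d (mv_odot opl st x y) =
                mv_sup opl st (mv_odot opl st (d x) y) (mv_odot opl st x (d y))}"

definition der_le :: "('a \<Rightarrow> 'a \<Rightarrow> 'a) \<Rightarrow> ('a \<Rightarrow> 'a) \<Rightarrow> 'a \<Rightarrow> ('a \<Rightarrow> 'a) \<Rightarrow> ('a \<Rightarrow> 'a) \<Rightarrow> bool" where
  "der_le opl st z d d' \<longleftrightarrow> (\<forall>x. mv_le opl st z (d x) (d' x))"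

definition map_inf :: "('a \<Rightarrow> 'a \<Rightarrow> 'a) \<Rightarrow> ('a \<Rightarrow> 'a) \<Rightarrow> ('a \<Rightarrow> 'a) \<Rightarrow> ('a \<Rightarrow> 'a) \<Rightarrow> 'a \<Rightarrow> 'a" where
  "map_inf opl st d d' = (\<lambda>x. mv_inf opl st (d x) (d' x))"

definition chi :: "('a \<Rightarrow> 'a) \<Rightarrow> 'a \<Rightarrow> 'a \<Rightarrow> 'a \<Rightarrow> 'a" where
  "chi st z u = (\<lambda>x. if x = mv_one st z then u else x)"

definition chi_set :: "('a \<Rightarrow> 'a) \<Rightarrow> 'a \<Rightarrow> ('a \<Rightarrow> 'a) set" where
  "chi_set st z = {chi st z u | u. True}"

end

theory Submission
  imports Defs
begin

(* Every (odot,vee)-derivation d satisfies d 0 = 0, and then 0 = d (x odot x^* ) forces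
   d x odot x^* = 0, i.e. d x <= x. Hence a derivation lying above chi_u agrees with the identity
   off 1, i.e. it is chi_(d 1). The maps chi_u are derivations because x odot y = 1 only for
   x = y = 1, and they are closed under pointwise meets since x /\ x = x. *)

locale mv_alg =
  fixes opl :: "'a \<Rightarrow> 'a \<Rightarrow> 'a" (infixl "\<oplus>" 65) and st :: "'a \<Rightarrow> 'a" and z :: 'a
  assumes mv: "mv_algebra opl st z"
begin

abbreviation odot (infixl "\<odot>" 70) where "x \<odot> y \<equiv> mv_odot opl st x y"
abbreviation le (infix "\<preceq>" 50) where "x \<preceq> y \<equiv> mv_le opl st z x y"

lemma oplus_assoc: "x \<oplus> (y \<oplus> w) = x \<oplus> y \<oplus> w"
  and oplus_commute: "x \<oplus> y = y \<oplus> x"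
  and oplus_zero: "x \<oplus> z = x"
  and double_neg: "st (st x) = x"
  and oplus_one: "x \<oplus> st z = st z"
  and mv_law: "st (st x \<oplus> y) \<oplus> y = st (st y \<oplus> x) \<oplus> x"
  using mv unfolding mv_algebra_def by blast+

lemma zero_oplus: "z \<oplus> x = x"
  using oplus_commute oplus_zero by metis

lemma one_oplus: "st z \<oplus> x = st z"
  using oplus_commute oplus_one by metis

lemma neg_oplus_self: "st x \<oplus> x = st z"
  using mv_law[of x "st z"] by (simp add: double_neg oplus_one zero_oplus)

lemma oplus_eq_zeroD2: "x \<oplus> y = z \<Longrightarrow> y = z"
proof -
  assume sum: "x \<oplus> y = z"
  have "st y \<oplus> (x \<oplus> y) = x \<oplus> (st y \<oplus> y)"
    using oplus_assoc oplus_commute by metis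
  also have "\<dots> = st z"
    by (simp add: neg_oplus_self oplus_one)
  finally have "st y = st z"
    using sum oplus_zero by simp
  then show ?thesis
    using double_neg by metis
qed

lemma odot_neg_self: "x \<odot> st x = z"
  unfolding mv_odot_def by (simp add: double_neg neg_oplus_self)

lemma odot_one: "st z \<odot> y = y" "y \<odot> st z = y"
  unfolding mv_odot_def by (simp_all add: double_neg zero_oplus oplus_zero)

lemma odot_zero: "z \<odot> y = z" "y \<odot> z = z"
  unfolding mv_odot_def using double_neg[of z] by (simp_all add: one_oplus oplus_one)

lemma odot_eq_oneD1: "x \<odot> y = st z \<Longrightarrow> x = st z"
proof -
  assume "x \<odot> y = st z"
  then have "st y \<oplus> st x = z"
    unfolding mv_odot_def using double_neg oplus_commute by metis
  then show ?thesis
    using oplus_eq_zeroD2 double_neg by metis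
qed

lemma odot_le_right: "x \<odot> y \<preceq> y"
  unfolding mv_le_def mv_odot_def mv_one_def
  using oplus_assoc double_neg neg_oplus_self one_oplus by metis

lemma odot_le_left: "x \<odot> y \<preceq> x"
  using odot_le_right oplus_commute unfolding mv_odot_def by metis

lemma sup_commute: "mv_sup opl st x y = mv_sup opl st y x"
  unfolding mv_sup_def mv_odot_def double_neg by (rule mv_law)

lemma sup_absorb2: "x \<preceq> y \<Longrightarrow> mv_sup opl st x y = y"
  unfolding mv_le_def mv_sup_def mv_odot_def mv_one_def by (simp add: double_neg zero_oplus)

lemma sup_absorb1: "y \<preceq> x \<Longrightarrow> mv_sup opl st x y = x"
  using sup_absorb2 sup_commute by metis

lemma le_antisym: "x \<preceq> y \<Longrightarrow> y \<preceq> x \<Longrightarrow> x = y"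
  using sup_absorb1 sup_absorb2 by metis

lemma sup_idem: "mv_sup opl st x x = x"
  unfolding mv_sup_def by (simp add: odot_neg_self zero_oplus)

lemma sup_eq_zeroD1: "mv_sup opl st x y = z \<Longrightarrow> x = z"
proof -
  assume sup: "mv_sup opl st x y = z"
  then have "y = z"
    unfolding mv_sup_def by (rule oplus_eq_zeroD2)
  with sup show ?thesis
    unfolding mv_sup_def by (simp add: oplus_zero odot_one)
qed

lemma inf_idem: "mv_inf opl st x x = x"
  unfolding mv_inf_def by (simp add: neg_oplus_self odot_one)

lemma derivationD:
  "d \<in> odot_sup_derivations opl st \<Longrightarrow> d (x \<odot> y) = mv_sup opl st (d x \<odot> y) (x \<odot> d y)"
  unfolding odot_sup_derivations_def by blast

lemma derivation_zero: "d \<in> odot_sup_derivations opl st \<Longrightarrow> d z = z"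
  using derivationD[of d z z] by (simp add: odot_zero sup_idem)

lemma derivation_le: "d \<in> odot_sup_derivations opl st \<Longrightarrow> d x \<preceq> x"
proof -
  assume d: "d \<in> odot_sup_derivations opl st"
  have "mv_sup opl st (d x \<odot> st x) (x \<odot> d (st x)) = z"
    using derivationD[OF d, of x "st x"] by (simp add: odot_neg_self derivation_zero[OF d])
  then have "d x \<odot> st x = z"
    by (rule sup_eq_zeroD1)
  then show ?thesis
    unfolding mv_odot_def mv_le_def mv_one_def using double_neg by metis
qed

lemma chi_in_derivations: "chi st z u \<in> odot_sup_derivations opl st"
proof -
  have "chi st z u (x \<odot> y) = mv_sup opl st (chi st z u x \<odot> y) (x \<odot> chi st z u y)" for x y
  proof (cases "x = st z"; cases "y = st z")
    assume "x \<noteq> st z"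
    then have "x \<odot> y \<noteq> st z"
      using odot_eq_oneD1 by blast
    moreover assume "y \<noteq> st z"
    ultimately show ?thesis
      using \<open>x \<noteq> st z\<close> by (simp add: chi_def mv_one_def sup_idem)
  qed (auto simp: chi_def mv_one_def odot_one sup_idem sup_absorb1 sup_absorb2
      odot_le_left odot_le_right)
  then show ?thesis
    unfolding odot_sup_derivations_def by blast
qed

lemma map_inf_chi: "map_inf opl st (chi st z u) (chi st z v) = chi st z (mv_inf opl st u v)"
  unfolding map_inf_def chi_def by (auto simp: inf_idem)

lemma derivation_above_chi:
  assumes d: "d \<in> odot_sup_derivations opl st" and above: "der_le opl st z (chi st z u) d"
  shows "d = chi st z (d (st z))"
proof
  fix x
  show "d x = chi st z (d (st z)) x"
  proof (cases "x = st z")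
    case False
    then have "x \<preceq> d x"
      using above unfolding der_le_def chi_def mv_one_def by metis
    with derivation_le[OF d] False show ?thesis
      by (simp add: chi_def mv_one_def le_antisym)
  qed (simp add: chi_def mv_one_def)
qed

end

theorem proposition5p13:
  fixes opl :: "'a \<Rightarrow> 'a \<Rightarrow> 'a" and st :: "'a \<Rightarrow> 'a" and z :: 'a
  assumes mv: "mv_algebra opl st z"
    and inf_closed: "\<forall>d\<in>odot_sup_derivations opl st. \<forall>d'\<in>odot_sup_derivations opl st.
                        map_inf opl st d d' \<in> odot_sup_derivations opl st"
  shows "chi_set st z \<noteq> {} \<and>
         chi_set st z \<subseteq> odot_sup_derivations opl st \<and>
         (\<forall>d\<in>chi_set st z. \<forall>d'\<in>chi_set st z. map_inf opl st d d' \<in> chi_set st z) \<and>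
         (\<forall>u d. d \<in> odot_sup_derivations opl st \<and> der_le opl st z (chi st z u) d
                  \<longrightarrow> d \<in> chi_set st z)"
proof -
  interpret mv_alg opl st z
    using mv by unfold_locales
  have "chi_set st z \<subseteq> odot_sup_derivations opl st"
    unfolding chi_set_def using chi_in_derivations by blast
  moreover have "map_inf opl st d d' \<in> chi_set st z"
    if "d \<in> chi_set st z" "d' \<in> chi_set st z" for d d'
    using that map_inf_chi unfolding chi_set_def by blast
  moreover have "d \<in> chi_set st z"
    if "d \<in> odot_sup_derivations opl st" "der_le opl st z (chi st z u) d" for u d
    using derivation_above_chi[OF that] unfolding chi_set_def by blast
  ultimately show ?thesis
    unfolding chi_set_def by blast
qed

end
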